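(* The categories $\mathbf{CS}$ and $Cob'$ described in the context are not quasi-Gröbner.
   Context: Quasi-Gröbner categories. Let $\mathcal{C}$ be a small category and $c$ an object. An admissible order on the morphisms out of $c$ is a choice, for every object $c'$, of a well-order on $\mathrm{Hom}(c,c')$ such that $f\prec f'$ implies $g\circ f\prec g\circ f'$ for all $g$. On morphisms out of $c$ put the preorder $f\le g$ iff $g=h\circ f$ for some $h$; $|c/\mathcal{C}|$ is the associated poset. A poset is Noetherian if every sequence $x_1,x_2,\dots$ has $i<j$ with $x_i\le x_j$. $\mathcal{C}$ is Gröbner if for every object $c$: (G1) morphisms out of $c$ admit an admissible order, and (G2) $|c/\mathcal{C}|$ is Noetherian. A functor $\Phi:\mathcal{C}\to\mathcal{D}$ has property (F) if for every object $d$ of $\mathcal{D}$ there are finitely many objects $c_i$ of $\mathcal{C}$ and morphisms $f_i:d\to\Phi(c_i)$ such that every $f:d\to\Phi(c)$ factors as $\Phi(g)\circ f_i$ for some $i$ and $g:c_i\to c$. $\mathcal{D}$ is quasi-Gröbner if there is a Gröbner $\mathcal{C}$ and an essentially surjective functor $\mathcal{C}\to\mathcal{D}$ with property (F). Let $Cob$ be the category whose objects are finite sequences of circles (i.e.\ disjoint unions of $n\ge 0$ indexed circles) and whose morphisms are diffeomorphism classes (relative to the boundary) of compact orientable cobordisms between the corresponding disjoint unions of indexed circles, with composition by gluing. $Cob'$ is the subcategory of $Cob$ containing all morphisms except the non-identity morphisms whose source is the empty sequence $\emptyset$. $\mathbf{CS}$ is the full subcategory of the slice category $\emptyset/Cob$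 on the non-empty connected cobordisms from $\emptyset$; i.e.\ objects are connected compact orientable surfaces with indexed boundary circles (possibly closed), and a morphism $\Sigma\to\Sigma'$ is a cobordism $W$ from $\partial\Sigma$ to $\partial\Sigma'$ with $W\circ\Sigma=\Sigma'$. *)

theory Defs
  imports Main "HOL-Library.Multiset"
begin

text \<open>A small category: object set, hom-sets, composition
  Comp a b c g f = g after f for f : a -> b, g : b -> c, identities.\<close>
record ('o, 'm) smallcat =
  Ob   :: "'o set"
  Hom  :: "'o \<Rightarrow> 'o \<Rightarrow> 'm set"
  Comp :: "'o \<Rightarrow> 'o \<Rightarrow> 'o \<Rightarrow> 'm \<Rightarrow> 'm \<Rightarrow> 'm"
  Idm  :: "'o \<Rightarrow> 'm"

definition is_category :: "('o, 'm) smallcat \<Rightarrow> bool" where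
  "is_category C \<longleftrightarrow>
     (\<forall>a\<in>Ob C. Idm C a \<in> Hom C a a) \<and>
     (\<forall>a\<in>Ob C. \<forall>b\<in>Ob C. \<forall>c\<in>Ob C. \<forall>f\<in>Hom C a b. \<forall>g\<in>Hom C b c.
        Comp C a b c g f \<in> Hom C a c) \<and>
     (\<forall>a\<in>Ob C. \<forall>b\<in>Ob C. \<forall>c\<in>Ob C. \<forall>d\<in>Ob C. \<forall>f\<in>Hom C a b. \<forall>g\<in>Hom C b c. \<forall>h\<in>Hom C c d.
        Comp C a c d h (Comp C a b c g f) = Comp C a b d (Comp C b c d h g) f) \<and>
     (\<forall>a\<in>Ob C. \<forall>b\<in>Ob C. \<forall>f\<in>Hom C a b.
        Comp C a a b f (Idm C a) = f \<and> Comp C a b b (Idm C b) f = f)"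

definition out_of :: "('o, 'm) smallcat \<Rightarrow> 'o \<Rightarrow> ('o \<times> 'm) set" where
  "out_of C c = {(c', f). c' \<in> Ob C \<and> f \<in> Hom C c c'}"

definition under_le :: "('o, 'm) smallcat \<Rightarrow> 'o \<Rightarrow> 'o \<times> 'm \<Rightarrow> 'o \<times> 'm \<Rightarrow> bool" where
  "under_le C c x y \<longleftrightarrow> (\<exists>h\<in>Hom C (fst x) (fst y). snd y = Comp C c (fst x) (fst y) h (snd x))"

definition admissible_order :: "('o, 'm) smallcat \<Rightarrow> 'o \<Rightarrow> ('o \<Rightarrow> 'm rel) \<Rightarrow> bool" where
  "admissible_order C c r \<longleftrightarrow>
     (\<forall>c'\<in>Ob C. well_order_on (Hom C c c') (r c')) \<and>
     (\<forall>c'\<in>Ob C. \<forall>c''\<in>Ob C. \<forall>f\<in>Hom C c c'. \<forall>f'\<in>Hom C c c'. \<forall>g\<in>Hom C c' c''.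
        (f, f') \<in> r c' \<and> f \<noteq> f' \<longrightarrow>
        (Comp C c c' c'' g f, Comp C c c' c'' g f') \<in> r c'' \<and>
        Comp C c c' c'' g f \<noteq> Comp C c c' c'' g f')"

text \<open>Noetherianity of |c/C| (the poset associated to the preorder under_le;
  the sequence condition is the same on the preorder and on its quotient poset).\<close>
definition noetherian_under :: "('o, 'm) smallcat \<Rightarrow> 'o \<Rightarrow> bool" where
  "noetherian_under C c \<longleftrightarrow>
     (\<forall>s :: nat \<Rightarrow> 'o \<times> 'm. (\<forall>i. s i \<in> out_of C c) \<longrightarrow>
        (\<exists>i j. i < j \<and> under_le C c (s i) (s j)))"

definition groebner :: "('o, 'm) smallcat \<Rightarrow> bool" where
  "groebner C \<longleftrightarrow> (\<forall>c\<in>Ob C. (\<exists>r. admissible_order C c r) \<and> noetherian_under C c)"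

definition is_functor :: "('o, 'm) smallcat \<Rightarrow> ('p, 'n) smallcat \<Rightarrow> ('o \<Rightarrow> 'p)
    \<Rightarrow> ('o \<Rightarrow> 'o \<Rightarrow> 'm \<Rightarrow> 'n) \<Rightarrow> bool" where
  "is_functor C D FO FM \<longleftrightarrow>
     (\<forall>a\<in>Ob C. FO a \<in> Ob D) \<and>
     (\<forall>a\<in>Ob C. \<forall>b\<in>Ob C. \<forall>f\<in>Hom C a b. FM a b f \<in> Hom D (FO a) (FO b)) \<and>
     (\<forall>a\<in>Ob C. FM a a (Idm C a) = Idm D (FO a)) \<and>
     (\<forall>a\<in>Ob C. \<forall>b\<in>Ob C. \<forall>c\<in>Ob C. \<forall>f\<in>Hom C a b. \<forall>g\<in>Hom C b c.
        FM a c (Comp C a b c g f) = Comp D (FO a) (FO b) (FO c) (FM b c g) (FM a b f))"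

definition isomorphic :: "('p, 'n) smallcat \<Rightarrow> 'p \<Rightarrow> 'p \<Rightarrow> bool" where
  "isomorphic D x y \<longleftrightarrow> (\<exists>f\<in>Hom D x y. \<exists>g\<in>Hom D y x.
      Comp D x y x g f = Idm D x \<and> Comp D y x y f g = Idm D y)"

definition ess_surj :: "('o, 'm) smallcat \<Rightarrow> ('p, 'n) smallcat \<Rightarrow> ('o \<Rightarrow> 'p) \<Rightarrow> bool" where
  "ess_surj C D FO \<longleftrightarrow> (\<forall>d\<in>Ob D. \<exists>c\<in>Ob C. isomorphic D (FO c) d)"

definition property_F :: "('o, 'm) smallcat \<Rightarrow> ('p, 'n) smallcat \<Rightarrow> ('o \<Rightarrow> 'p)
    \<Rightarrow> ('o \<Rightarrow> 'o \<Rightarrow> 'm \<Rightarrow> 'n) \<Rightarrow> bool" where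
  "property_F C D FO FM \<longleftrightarrow>
     (\<forall>d\<in>Ob D. \<exists>I. finite I \<and> I \<subseteq> {(c, f). c \<in> Ob C \<and> f \<in> Hom D d (FO c)} \<and>
        (\<forall>c\<in>Ob C. \<forall>f\<in>Hom D d (FO c). \<exists>(ci, fi)\<in>I. \<exists>g\<in>Hom C ci c.
            f = Comp D d (FO ci) (FO c) (FM ci c g) fi))"

text \<open>D is quasi-Groebner via the Groebner category C and functor (FO, FM).
  D is quasi-Groebner iff such C, FO, FM exist for some types.\<close>
definition quasi_groebner_via :: "('o, 'm) smallcat \<Rightarrow> ('o \<Rightarrow> 'p)
    \<Rightarrow> ('o \<Rightarrow> 'o \<Rightarrow> 'm \<Rightarrow> 'n) \<Rightarrow> ('p, 'n) smallcat \<Rightarrow> bool" where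
  "quasi_groebner_via C FO FM D \<longleftrightarrow>
     is_category C \<and> groebner C \<and> is_functor C D FO FM \<and> ess_surj C D FO \<and> property_F C D FO FM"

text \<open>Object n = disjoint union of n indexed circles. A cobordism m -> n, up to
  diffeomorphism rel boundary, is given by the set of its components meeting the
  boundary, each recorded as (set of boundary circles it contains, genus), where
  Inl i is the i-th incoming and Inr j the j-th outgoing circle, together with
  the multiset of genera of its closed components.\<close>
type_synonym cob = "((nat + nat) set \<times> nat) set \<times> nat multiset"

definition bnd :: "nat \<Rightarrow> nat \<Rightarrow> (nat + nat) set" where
  "bnd m n = Inl ` {..<m} \<union> Inr ` {..<n}"

definition cob_hom :: "nat \<Rightarrow> nat \<Rightarrow> cob set" where
  "cob_hom m n = {(P, M).
     (\<forall>(B, g)\<in>P. B \<noteq> {}) \<and>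
     (\<Union>(B, g)\<in>P. B) = bnd m n \<and>
     (\<forall>x\<in>P. \<forall>y\<in>P. fst x \<inter> fst y \<noteq> {} \<longrightarrow> x = y)}"

definition cob_id :: "nat \<Rightarrow> cob" where
  "cob_id n = ((\<lambda>i. ({Inl i, Inr i}, 0)) ` {..<n}, {#})"

text \<open>Gluing: tagged components (True = from the first cobordism W1 : a -> b,
  False = from W2 : b -> c); components are adjacent if they share a middle circle.\<close>
definition glue_adj :: "bool \<times> ((nat + nat) set \<times> nat) \<Rightarrow> bool \<times> ((nat + nat) set \<times> nat) \<Rightarrow> bool" where
  "glue_adj x y \<longleftrightarrow>
     (fst x \<and> \<not> fst y \<and> (\<exists>j. Inr j \<in> fst (snd x) \<and> Inl j \<in> fst (snd y))) \<or>
     (\<not> fst x \<and> fst y \<and> (\<exists>j. Inl j \<in> fst (snd x) \<and> Inr j \<in> fst (snd y)))"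

definition glue_pieces :: "cob \<Rightarrow> cob \<Rightarrow> (bool \<times> ((nat + nat) set \<times> nat)) set" where
  "glue_pieces W2 W1 = Pair True ` fst W1 \<union> Pair False ` fst W2"

definition glue_classes :: "cob \<Rightarrow> cob \<Rightarrow> (bool \<times> ((nat + nat) set \<times> nat)) set set" where
  "glue_classes W2 W1 = glue_pieces W2 W1 //
     ({(x, y). x \<in> glue_pieces W2 W1 \<and> y \<in> glue_pieces W2 W1 \<and> glue_adj x y})\<^sup>*"

definition outer_bnd :: "(bool \<times> ((nat + nat) set \<times> nat)) set \<Rightarrow> (nat + nat) set" where
  "outer_bnd K = {Inl i | i. \<exists>x\<in>K. fst x \<and> Inl i \<in> fst (snd x)} \<union>
                 {Inr k | k. \<exists>x\<in>K. \<not> fst x \<and> Inr k \<in> fst (snd x)}"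

definition mid_circles :: "(bool \<times> ((nat + nat) set \<times> nat)) set \<Rightarrow> nat set" where
  "mid_circles K = {j. \<exists>x\<in>K. fst x \<and> Inr j \<in> fst (snd x)}"

text \<open>Genus of a glued component (Euler characteristic):
  sum of genera + number of gluing circles - number of pieces + 1.\<close>
definition glued_genus :: "(bool \<times> ((nat + nat) set \<times> nat)) set \<Rightarrow> nat" where
  "glued_genus K = (\<Sum>x\<in>K. snd (snd x)) + card (mid_circles K) + 1 - card K"

text \<open>cob_comp W2 W1 = W2 after W1 (glue outgoing circles of W1 to incoming of W2).\<close>
definition cob_comp :: "cob \<Rightarrow> cob \<Rightarrow> cob" where
  "cob_comp W2 W1 =
     ((\<lambda>K. (outer_bnd K, glued_genus K)) ` {K \<in> glue_classes W2 W1. outer_bnd K \<noteq> {}},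
      snd W1 + snd W2 + (\<Sum>K\<in>{K \<in> glue_classes W2 W1. outer_bnd K = {}}. {#glued_genus K#}))"

definition Cob :: "(nat, cob) smallcat" where
  "Cob = \<lparr>Ob = UNIV, Hom = cob_hom, Comp = (\<lambda>_ _ _ g f. cob_comp g f), Idm = cob_id\<rparr>"

text \<open>Cob': drop the non-identity morphisms with source the empty sequence.\<close>
definition Cob' :: "(nat, cob) smallcat" where
  "Cob' = \<lparr>Ob = UNIV,
           Hom = (\<lambda>m n. if m = 0 then cob_hom m n \<inter> {f. n = 0 \<and> f = cob_id 0} else cob_hom m n),
           Comp = (\<lambda>_ _ _ g f. cob_comp g f), Idm = cob_id\<rparr>"

text \<open>CS: full subcategory of the slice category under the empty sequence on the
  non-empty connected surfaces (exactly one component).\<close>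
definition connected_nonempty :: "cob \<Rightarrow> bool" where
  "connected_nonempty W \<longleftrightarrow> card (fst W) + size (snd W) = 1"

definition CS :: "(nat \<times> cob, cob) smallcat" where
  "CS = \<lparr>Ob = {(n, S). S \<in> cob_hom 0 n \<and> connected_nonempty S},
         Hom = (\<lambda>(n, S) (n', S'). {W \<in> cob_hom n n'. cob_comp W S = S'}),
         Comp = (\<lambda>_ _ _ g f. cob_comp g f),
         Idm = (\<lambda>(n, S). cob_id n)\<rparr>"

end

(*
  Let Phi : C -> D have property (F), with every |c/C| Noetherian. Given morphisms
  f_k : d -> Phi(c_k) for all k, property (F) at d and the pigeonhole principle make
  infinitely many f_k factor as Phi(g_k) o f_0 through one f_0 : d -> Phi(c_0); Noetherianity
  of |c_0/C| then gives i < j and h : c_i -> c_j with g_j = h o g_i.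

  In CS, let d be the disk and f_k the cap of genus k, landing in the closed surface of
  genus k. Gluing onto a closed surface only adds components, so a closed surface has no
  morphism to any other object; in particular it is isomorphic only to itself, hence equal to
  some Phi(c_k), and Phi(h) cannot exist. In Cob', let d be one circle and f_k the cap of genus
  k into the empty sequence, whose only endomorphism is the identity; then Phi(h) = id
  forces f_i = f_j.
*)

theory Submission
  imports Defs "HOL-Library.Infinite_Set"
begin

lemma is_functor_Ob: "is_functor C D FO FM \<Longrightarrow> a \<in> Ob C \<Longrightarrow> FO a \<in> Ob D"
  unfolding is_functor_def by blast

lemma is_functor_Hom:
  "is_functor C D FO FM \<Longrightarrow> a \<in> Ob C \<Longrightarrow> b \<in> Ob C \<Longrightarrow> f \<in> Hom C a b
    \<Longrightarrow> FM a b f \<in> Hom D (FO a) (FO b)"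
  unfolding is_functor_def by blast

lemma is_functor_Comp:
  "is_functor C D FO FM \<Longrightarrow> a \<in> Ob C \<Longrightarrow> b \<in> Ob C \<Longrightarrow> c \<in> Ob C
    \<Longrightarrow> f \<in> Hom C a b \<Longrightarrow> g \<in> Hom C b c
    \<Longrightarrow> FM a c (Comp C a b c g f) = Comp D (FO a) (FO b) (FO c) (FM b c g) (FM a b f)"
  unfolding is_functor_def by blast

lemma finite_range_constant_subseq:
  fixes p :: "nat \<Rightarrow> 'a"
  assumes "finite (range p)"
  obtains e :: "nat \<Rightarrow> nat" and x where "strict_mono e" "\<And>m. p (e m) = x"
proof -
  obtain k0 where "infinite {k. p k = p k0}"
    using pigeonhole_infinite[OF infinite_UNIV_nat assms] by auto
  then obtain e :: "nat \<Rightarrow> nat" where "strict_mono e" "\<forall>m. e m \<in> {k. p k = p k0}"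
    using infinite_enumerate by blast
  then show thesis
    by (intro that[of e "p k0"]) auto
qed

lemma property_F_noetherian_factor_pair:
  fixes c :: "nat \<Rightarrow> 'o" and f :: "nat \<Rightarrow> 'n"
  assumes F: "property_F C D FO FM"
    and noeth: "\<forall>c\<in>Ob C. noetherian_under C c"
    and d: "d \<in> Ob D" and c: "\<And>k. c k \<in> Ob C" and f: "\<And>k. f k \<in> Hom D d (FO (c k))"
  obtains i j c0 f0 g h where "i < j" "c0 \<in> Ob C" "g \<in> Hom C c0 (c i)" "h \<in> Hom C (c i) (c j)"
    "f i = Comp D d (FO c0) (FO (c i)) (FM c0 (c i) g) f0"
    "f j = Comp D d (FO c0) (FO (c j)) (FM c0 (c j) (Comp C c0 (c i) (c j) h g)) f0"
proof -
  from F d obtain I where "finite I" and I: "I \<subseteq> {(c, f). c \<in> Ob C \<and> f \<in> Hom D d (FO c)}"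
    and factor: "\<forall>c\<in>Ob C. \<forall>f\<in>Hom D d (FO c). \<exists>(c0, f0)\<in>I. \<exists>g\<in>Hom C c0 c.
                   f = Comp D d (FO c0) (FO c) (FM c0 c g) f0"
    unfolding property_F_def by meson
  have "\<exists>p g. p \<in> I \<and> g \<in> Hom C (fst p) (c k) \<and>
              f k = Comp D d (FO (fst p)) (FO (c k)) (FM (fst p) (c k) g) (snd p)" for k
  proof -
    from factor c f obtain c0 f0 g where "(c0, f0) \<in> I" "g \<in> Hom C c0 (c k)"
      "f k = Comp D d (FO c0) (FO (c k)) (FM c0 (c k) g) f0"
      by blast
    then show ?thesis
      by (intro exI[of _ "(c0, f0)"] exI[of _ g]) simp
  qed
  then obtain p g where p: "\<And>k. p k \<in> I" and g: "\<And>k. g k \<in> Hom C (fst (p k)) (c k)"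
    and fg: "\<And>k. f k = Comp D d (FO (fst (p k))) (FO (c k)) (FM (fst (p k)) (c k) (g k)) (snd (p k))"
    by metis
  have "finite (range p)"
    using p \<open>finite I\<close> by (meson finite_subset image_subsetI)
  then obtain e :: "nat \<Rightarrow> nat" and x where e: "strict_mono e" and pe: "\<And>m. p (e m) = x"
    by (metis finite_range_constant_subseq)
  obtain c0 f0 where x: "x = (c0, f0)"
    by (cases x)
  have c0: "c0 \<in> Ob C"
    using I p[of "e 0"] pe[of 0] x by auto
  have g0: "g (e m) \<in> Hom C c0 (c (e m))" for m
    using g[of "e m"] pe[of m] x by simp
  then have "\<forall>m. (c (e m), g (e m)) \<in> out_of C c0"
    using c unfolding out_of_def by simp
  then obtain i j where "i < j" and "under_le C c0 (c (e i), g (e i)) (c (e j), g (e j))"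
    using noeth[rule_format, OF c0, unfolded noetherian_under_def, rule_format,
                of "\<lambda>m. (c (e m), g (e m))"]
    by auto
  then obtain h where h: "h \<in> Hom C (c (e i)) (c (e j))"
    and gh: "g (e j) = Comp C c0 (c (e i)) (c (e j)) h (g (e i))"
    unfolding under_le_def by auto
  have "f (e i) = Comp D d (FO c0) (FO (c (e i))) (FM c0 (c (e i)) (g (e i))) f0"
    using fg[of "e i"] pe[of i] x by simp
  moreover have "f (e j) = Comp D d (FO c0) (FO (c (e j)))
                     (FM c0 (c (e j)) (Comp C c0 (c (e i)) (c (e j)) h (g (e i)))) f0"
    using fg[of "e j"] pe[of j] x gh by simp
  ultimately show thesis
    using that[OF strict_monoD[OF e \<open>i < j\<close>] c0 g0 h] by blast
qed

lemma bnd_zero_left: "bnd 0 n = Inr ` {..<n}"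
  and bnd_zero_right: "bnd m 0 = Inl ` {..<m}"
  unfolding bnd_def by auto

lemma mem_cob_hom:
  "W \<in> cob_hom m n \<longleftrightarrow>
     (\<forall>(B, g)\<in>fst W. B \<noteq> {}) \<and> (\<Union>(B, g)\<in>fst W. B) = bnd m n \<and>
     (\<forall>x\<in>fst W. \<forall>y\<in>fst W. fst x \<inter> fst y \<noteq> {} \<longrightarrow> x = y)"
  by (cases W) (simp add: cob_hom_def)

lemma cob_homD:
  assumes W: "W \<in> cob_hom m n" and B: "(B, g) \<in> fst W"
  shows "B \<noteq> {}" "B \<subseteq> bnd m n"
proof -
  from W have "\<forall>(B, g)\<in>fst W. B \<noteq> {}" "(\<Union>(B, g)\<in>fst W. B) = bnd m n"
    by (simp_all add: mem_cob_hom)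
  with B show "B \<noteq> {}" "B \<subseteq> bnd m n"
    by fast+
qed

lemma cob_hom_components_disjoint:
  "W \<in> cob_hom m n \<Longrightarrow> x \<in> fst W \<Longrightarrow> y \<in> fst W \<Longrightarrow> fst x \<inter> fst y \<noteq> {} \<Longrightarrow> x = y"
  by (simp add: mem_cob_hom)

lemma finite_cob_components:
  assumes W: "W \<in> cob_hom m n"
  shows "finite (fst W)"
proof -
  have "inj_on fst (fst W)"
  proof (rule inj_onI)
    fix x y assume "x \<in> fst W" "y \<in> fst W" "fst x = fst y"
    moreover have "fst x \<noteq> {}"
      using cob_homD(1)[OF W] \<open>x \<in> fst W\<close> by (cases x) auto
    ultimately show "x = y"
      using cob_hom_components_disjoint[OF W] by simp
  qed
  moreover have "fst ` fst W \<subseteq> Pow (bnd m n)"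
    using cob_homD(2)[OF W, of "fst x" "snd x" for x] by auto
  moreover have "finite (bnd m n)"
    unfolding bnd_def by simp
  ultimately show ?thesis
    by (meson finite_Pow_iff finite_imageD finite_subset)
qed

lemma cob_comp_through_empty:
  assumes W1: "W1 \<in> cob_hom l 0" and W2: "W2 \<in> cob_hom 0 n"
  shows "cob_comp W2 W1 = (fst W1 \<union> fst W2, snd W1 + snd W2)"
proof -
  let ?pieces = "glue_pieces W2 W1"
  have side: "fst (snd x) \<noteq> {}" "fst (snd x) \<subseteq> (if fst x then range Inl else range Inr)"
    if "x \<in> ?pieces" for x
  proof -
    obtain b B g where x: "x = (b, B, g)"
      by (cases x) auto
    show "fst (snd x) \<noteq> {}" "fst (snd x) \<subseteq> (if fst x then range Inl else range Inr)"
      using that cob_homD[OF W1, of B g] cob_homD[OF W2, of B g] unfolding x glue_pieces_def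
      by (auto simp: bnd_zero_left bnd_zero_right)
  qed
  have "\<not> glue_adj x y" if "x \<in> ?pieces" "y \<in> ?pieces" for x y
    using side(2)[OF that(1)] side(2)[OF that(2)] unfolding glue_adj_def by (auto split: if_splits)
  then have no_gluing: "{(x, y). x \<in> ?pieces \<and> y \<in> ?pieces \<and> glue_adj x y} = {}"
    by blast
  have classes: "glue_classes W2 W1 = (\<lambda>x. {x}) ` ?pieces"
    unfolding glue_classes_def no_gluing quotient_def by auto
  have single: "outer_bnd {x} = fst (snd x)" "glued_genus {x} = snd (snd x)" if "x \<in> ?pieces" for x
  proof -
    obtain b B g where x: "x = (b, B, g)"
      by (cases x) auto
    have B: "B \<subseteq> (if b then range Inl else range Inr)"
      using side(2)[OF that] x by simp
    then show "outer_bnd {x} = fst (snd x)"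
      unfolding x outer_bnd_def by (cases b) auto
    have "mid_circles {x} = {}"
      using B unfolding x mid_circles_def by (cases b) auto
    then show "glued_genus {x} = snd (snd x)"
      unfolding glued_genus_def x by simp
  qed
  have open_classes: "{K \<in> glue_classes W2 W1. outer_bnd K \<noteq> {}} = (\<lambda>x. {x}) ` ?pieces"
    and closed_classes: "{K \<in> glue_classes W2 W1. outer_bnd K = {}} = {}"
    using side(1) single(1) unfolding classes by auto
  have "(\<lambda>K. (outer_bnd K, glued_genus K)) ` (\<lambda>x. {x}) ` ?pieces = snd ` ?pieces"
    unfolding image_image using single by (intro image_cong) (simp_all add: prod_eq_iff)
  also have "\<dots> = fst W1 \<union> fst W2"
    by (simp add: glue_pieces_def image_Un image_image)
  finally show ?thesis
    unfolding cob_comp_def open_classes closed_classes by simp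
qed

lemma cob_id_zero: "cob_id 0 = ({}, {#})"
  by (simp add: cob_id_def)

lemma cob_id_zero_cob_hom: "cob_id 0 \<in> cob_hom 0 0"
  unfolding cob_id_zero cob_hom_def bnd_def by simp

lemma cob_comp_id_zero_left: "W \<in> cob_hom m 0 \<Longrightarrow> cob_comp (cob_id 0) W = W"
  using cob_comp_through_empty[OF _ cob_id_zero_cob_hom] by (simp add: cob_id_zero)

definition closed_surface :: "nat \<Rightarrow> cob" where
  "closed_surface k = ({}, {#k#})"

definition disk :: cob where
  "disk = ({({Inr 0}, 0)}, {#})"

definition cap :: "nat \<Rightarrow> cob" where
  "cap k = ({({Inl 0}, k)}, {#})"

lemma closed_surface_cob_hom: "closed_surface k \<in> cob_hom 0 0"
  and disk_cob_hom: "disk \<in> cob_hom 0 1"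
  and cap_cob_hom: "cap k \<in> cob_hom 1 0"
  unfolding closed_surface_def disk_def cap_def cob_hom_def bnd_def by auto

lemma rtrancl_sym_pair: "{(a, b), (b, a)}\<^sup>* = {a, b} \<times> {a, b} \<union> Id"
proof
  show "{(a, b), (b, a)}\<^sup>* \<subseteq> {a, b} \<times> {a, b} \<union> Id"
  proof (rule subrelI)
    fix x y assume "(x, y) \<in> {(a, b), (b, a)}\<^sup>*"
    then show "(x, y) \<in> {a, b} \<times> {a, b} \<union> Id"
      by induction auto
  qed
qed auto

lemma cob_comp_cap_disk: "cob_comp (cap k) disk = closed_surface k"
proof -
  define a where "a = (True, ({Inr 0} :: (nat + nat) set, 0 :: nat))"
  define b where "b = (False, ({Inl 0} :: (nat + nat) set, k))"
  have pieces: "glue_pieces (cap k) disk = {a, b}"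
    unfolding glue_pieces_def cap_def disk_def a_def b_def by auto
  have "{(x, y). x \<in> {a, b} \<and> y \<in> {a, b} \<and> glue_adj x y} = {(a, b), (b, a)}"
    unfolding a_def b_def glue_adj_def by auto
  moreover have "({a, b} \<times> {a, b} \<union> Id) `` {a} = {a, b}" "({a, b} \<times> {a, b} \<union> Id) `` {b} = {a, b}"
    by auto
  ultimately have classes: "glue_classes (cap k) disk = {{a, b}}"
    unfolding glue_classes_def pieces quotient_def by (simp add: rtrancl_sym_pair)
  have "a \<noteq> b" "outer_bnd {a, b} = {}" "mid_circles {a, b} = {0}"
    unfolding a_def b_def outer_bnd_def mid_circles_def by auto
  then have "glued_genus {a, b} = k"
    unfolding glued_genus_def by (simp add: a_def b_def)
  moreover have "{K \<in> glue_classes (cap k) disk. outer_bnd K \<noteq> {}} = {}"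
    and "{K \<in> glue_classes (cap k) disk. outer_bnd K = {}} = {{a, b}}"
    using \<open>outer_bnd {a, b} = {}\<close> unfolding classes by auto
  ultimately show ?thesis
    unfolding cob_comp_def by (simp add: cap_def disk_def closed_surface_def)
qed

lemma Ob_CS: "(n, S) \<in> Ob CS \<longleftrightarrow> S \<in> cob_hom 0 n \<and> connected_nonempty S"
  by (simp add: CS_def)

lemma Hom_CS: "Hom CS (n, S) (n', S') = {W \<in> cob_hom n n'. cob_comp W S = S'}"
  by (simp add: CS_def)

lemma closed_surface_Ob_CS: "(0, closed_surface k) \<in> Ob CS"
  and disk_Ob_CS: "(1, disk) \<in> Ob CS"
  unfolding Ob_CS connected_nonempty_def
  using closed_surface_cob_hom disk_cob_hom by (simp_all add: closed_surface_def disk_def)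

lemma cap_Hom_CS: "cap k \<in> Hom CS (1, disk) (0, closed_surface k)"
  unfolding Hom_CS using cap_cob_hom cob_comp_cap_disk by simp

lemma Hom_CS_from_closed_surface:
  assumes X: "X \<in> Ob CS" and W: "W \<in> Hom CS (0, closed_surface k) X"
  shows "X = (0, closed_surface k)"
proof -
  obtain n S where X_def: "X = (n, S)"
    by (cases X)
  have W_hom: "W \<in> cob_hom 0 n" and S: "S = cob_comp W (closed_surface k)"
    using W unfolding X_def Hom_CS by auto
  then have S_eq: "S = (fst W, {#k#} + snd W)"
    using cob_comp_through_empty[OF closed_surface_cob_hom W_hom] by (simp add: closed_surface_def)
  then have "card (fst W) + size ({#k#} + snd W) = 1"
    using X unfolding X_def Ob_CS connected_nonempty_def by simp
  then have "card (fst W) = 0" "snd W = {#}"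
    by auto
  then have "fst W = {}"
    using finite_cob_components[OF W_hom] by simp
  then have "bnd 0 n = {}"
    using W_hom unfolding mem_cob_hom by simp
  then have "n = 0"
    unfolding bnd_zero_left by (simp add: lessThan_empty_iff)
  with S_eq \<open>fst W = {}\<close> \<open>snd W = {#}\<close> show ?thesis
    unfolding X_def closed_surface_def by simp
qed

lemma CS_not_quasi_groebner: "\<not> quasi_groebner_via C FO FM CS"
proof
  assume "quasi_groebner_via C FO FM CS"
  then have Phi: "is_functor C CS FO FM" and F: "property_F C CS FO FM"
    and surj: "ess_surj C CS FO" and noeth: "\<forall>c\<in>Ob C. noetherian_under C c"
    unfolding quasi_groebner_via_def groebner_def by blast+
  have "\<exists>c\<in>Ob C. FO c = (0, closed_surface k)" for k
  proof -
    obtain c where c: "c \<in> Ob C" and "isomorphic CS (FO c) (0, closed_surface k)"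
      using surj closed_surface_Ob_CS unfolding ess_surj_def by blast
    then obtain W where "W \<in> Hom CS (0, closed_surface k) (FO c)"
      unfolding isomorphic_def by blast
    with c show ?thesis
      using Hom_CS_from_closed_surface is_functor_Ob[OF Phi c] by blast
  qed
  then obtain c where c: "\<And>k. c k \<in> Ob C" and Fc: "\<And>k. FO (c k) = (0, closed_surface k)"
    by metis
  have cap: "cap k \<in> Hom CS (1, disk) (FO (c k))" for k
    unfolding Fc by (rule cap_Hom_CS)
  obtain i j h where "i < j" and h: "h \<in> Hom C (c i) (c j)"
    by (rule property_F_noetherian_factor_pair[where f = cap, OF F noeth disk_Ob_CS c cap]) (rule that)
  have "FM (c i) (c j) h \<in> Hom CS (0, closed_surface i) (0, closed_surface j)"
    using is_functor_Hom[OF Phi c c h] unfolding Fc .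
  then have "closed_surface j = closed_surface i"
    using Hom_CS_from_closed_surface closed_surface_Ob_CS by blast
  with \<open>i < j\<close> show False
    unfolding closed_surface_def by simp
qed

lemma Hom_Cob'_zero: "Hom Cob' 0 n = (if n = 0 then {cob_id 0} else {})"
  using cob_id_zero_cob_hom by (auto simp: Cob'_def)

lemma Hom_Cob'_subset: "Hom Cob' m n \<subseteq> cob_hom m n"
  by (auto simp: Cob'_def)

lemma cap_Hom_Cob': "cap k \<in> Hom Cob' 1 0"
  using cap_cob_hom by (simp add: Cob'_def)

lemma Cob'_not_quasi_groebner: "\<not> quasi_groebner_via C FO FM Cob'"
proof
  assume "quasi_groebner_via C FO FM Cob'"
  then have Phi: "is_functor C Cob' FO FM" and F: "property_F C Cob' FO FM"
    and surj: "ess_surj C Cob' FO" and noeth: "\<forall>c\<in>Ob C. noetherian_under C c"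
    unfolding quasi_groebner_via_def groebner_def by blast+
  obtain c0 where c0: "c0 \<in> Ob C" and "isomorphic Cob' (FO c0) 0"
    using surj unfolding ess_surj_def by (auto simp: Cob'_def)
  then have Fc0: "FO c0 = 0"
    unfolding isomorphic_def Hom_Cob'_zero by (auto split: if_splits)
  have cap: "cap k \<in> Hom Cob' 1 (FO c0)" for k
    unfolding Fc0 by (rule cap_Hom_Cob')
  have one: "1 \<in> Ob Cob'"
    by (simp add: Cob'_def)
  obtain i j c' f' g h where "i < j" and c': "c' \<in> Ob C" and g: "g \<in> Hom C c' c0"
    and h: "h \<in> Hom C c0 c0"
    and cap_i: "cap i = Comp Cob' 1 (FO c') (FO c0) (FM c' c0 g) f'"
    and cap_j: "cap j = Comp Cob' 1 (FO c') (FO c0) (FM c' c0 (Comp C c' c0 c0 h g)) f'"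
    by (rule property_F_noetherian_factor_pair[where c = "\<lambda>_. c0" and f = cap,
          OF F noeth one c0 cap]) (rule that)
  have "FM c0 c0 h = cob_id 0"
    using is_functor_Hom[OF Phi c0 c0 h] unfolding Fc0 Hom_Cob'_zero by simp
  moreover have "FM c' c0 g \<in> cob_hom (FO c') 0"
    using is_functor_Hom[OF Phi c' c0 g] Hom_Cob'_subset unfolding Fc0 by blast
  ultimately have "FM c' c0 (Comp C c' c0 c0 h g) = FM c' c0 g"
    using is_functor_Comp[OF Phi c' c0 c0 g h] cob_comp_id_zero_left by (simp add: Cob'_def)
  with cap_i cap_j have "cap j = cap i"
    by simp
  with \<open>i < j\<close> show False
    by (simp add: cap_def)
qed

theorem proposition4p4:
  shows "\<not> (\<exists>(C :: ('a, 'b) smallcat) FO FM. quasi_groebner_via C FO FM CS) \<and>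
         \<not> (\<exists>(C :: ('c, 'd) smallcat) FO FM. quasi_groebner_via C FO FM Cob')"
  using CS_not_quasi_groebner Cob'_not_quasi_groebner by blast

end
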